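(* For every integer $k>1$, $\gamma(k) \le (2k+2)\,(\gamma(k-1)+1) - 1$.
   Context: For words $C,S$, $C$ is an \emph{s-cover} of $S$ if for every position $i$ of $S$ there exist indices $j_0<\dots<j_{|C|-1}$ with $S[j_t]=C[t]$ for all $t$ and $i\in\{j_0,\dots,j_{|C|-1}\}$. An s-cover $C$ of $S$ is \emph{non-trivial} if $|C|<|S|$; a word is \emph{s-primitive} if it has no non-trivial s-cover. $\gamma(k)$ is the maximum length of an s-primitive word over an alphabet of size $k$. *)

theory Defs
  imports Main "HOL-Library.Extended_Nat"
begin

definition scover :: "'a list \<Rightarrow> 'a list \<Rightarrow> bool" where
  "scover C S \<longleftrightarrow>
     (\<forall>i < length S. \<exists>js :: nat list.
        length js = length C \<and> sorted_wrt (<) js \<and>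
        (\<forall>t < length C. js ! t < length S \<and> S ! (js ! t) = C ! t) \<and>
        i \<in> set js)"

definition s_primitive :: "'a list \<Rightarrow> bool" where
  "s_primitive S \<longleftrightarrow> \<not> (\<exists>C. scover C S \<and> length C < length S)"

definition gamma :: "nat \<Rightarrow> enat" where
  "gamma k = (SUP S \<in> {S :: nat list. set S \<subseteq> {..<k} \<and> s_primitive S}. enat (length S))"

end

theory Submission
  imports Defs "HOL-Library.Sublist"
begin

text \<open>
  Let \<open>b = \<gamma>(k - 1) + 1\<close> and let \<open>S\<close> be s-primitive over \<open>k\<close> letters. An s-cover of a
  factor of \<open>S\<close> extends, by the surrounding letters, to an s-cover of \<open>S\<close>; so every factor is
  s-primitive, and a factor missing a letter can be renamed into an alphabet of \<open>k - 1\<close> letters.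
  Hence every factor of length \<open>b\<close> contains all \<open>k\<close> letters.

  Now let \<open>\<sigma>\<close> list the letters of \<open>S\<close> in order of first occurrence and \<open>\<rho>\<close> in order of
  last occurrence. If \<open>|S| \<ge> 2kb\<close>, then \<open>\<sigma>\<rho>\<close> is an s-cover of \<open>S\<close>: for a position \<open>i \<ge> kb\<close>
  split \<open>\<rho>\<close> at the letter \<open>S[i]\<close>; the letters after it occur again after \<open>i\<close>, \<open>\<sigma>\<close> embeds
  into the first factor of length \<open>b\<close>, and the at most \<open>k - 1\<close> letters of \<open>\<rho>\<close> before \<open>S[i]\<close>
  embed into the next \<open>k - 1\<close> such factors. Positions \<open>i < kb\<close> are the mirror image of this
  case under reversal. As \<open>|\<sigma>\<rho>| \<le> 2k < |S|\<close>, this contradicts primitivity, so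
  \<open>|S| < (2k + 2) b\<close>.
\<close>

definition occurrence :: "'a list \<Rightarrow> 'a list \<Rightarrow> nat list \<Rightarrow> bool" where
  "occurrence C S js \<longleftrightarrow>
     sorted_wrt (<) js \<and> (\<forall>j\<in>set js. j < length S) \<and> C = map ((!) S) js"

definition scover_at :: "'a list \<Rightarrow> 'a list \<Rightarrow> nat \<Rightarrow> bool" where
  "scover_at C S i \<longleftrightarrow>
     (\<exists>C1 C2. C = C1 @ S ! i # C2 \<and> subseq C1 (take i S) \<and> subseq C2 (drop (Suc i) S))"

lemma scover_iff_occurrences:
  "scover C S \<longleftrightarrow> (\<forall>i<length S. \<exists>js. occurrence C S js \<and> i \<in> set js)"
proof -
  have "(length js = length C \<and> sorted_wrt (<) js \<and>
        (\<forall>t<length C. js ! t < length S \<and> S ! (js ! t) = C ! t) \<and> i \<in> set js)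
      \<longleftrightarrow> occurrence C S js \<and> i \<in> set js" for js i
    unfolding occurrence_def list_eq_iff_nth_eq all_set_conv_all_nth by auto
  then show ?thesis
    unfolding scover_def by (simp only:)
qed

lemma subseq_map_nth_sorted:
  assumes "sorted_wrt (<) js" and "set js \<subseteq> {m..<n}" and "n \<le> length S"
  shows "subseq (map ((!) S) js) (drop m (take n S))"
proof -
  have "subseq js [m..<n]"
    using assms(1,2) by (intro sorted_subset_imp_subseq) auto
  then have "subseq (map ((!) S) js) (map ((!) S) [m..<n])"
    by (rule subseq_map)
  moreover have "map ((!) S) [m..<n] = drop m (take n S)"
    using assms(3) by (simp add: list_eq_iff_nth_eq)
  ultimately show ?thesis by simp
qed

lemma subseq_iff_occurrence: "subseq C S \<longleftrightarrow> (\<exists>js. occurrence C S js)"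
proof
  show "subseq C S \<Longrightarrow> \<exists>js. occurrence C S js"
  proof (induction rule: list_emb.induct)
    case (list_emb_Nil S)
    have "occurrence [] S []" by (simp add: occurrence_def)
    then show ?case ..
  next
    case (list_emb_Cons C S x)
    then obtain js where "occurrence C S js" by blast
    then have "occurrence C (x # S) (map Suc js)"
      by (auto simp: occurrence_def sorted_wrt_map)
    then show ?case ..
  next
    case (list_emb_Cons2 x y C S)
    then obtain js where "occurrence C S js" by blast
    then have "occurrence (x # C) (y # S) (0 # map Suc js)"
      using list_emb_Cons2.hyps by (auto simp: occurrence_def sorted_wrt_map)
    then show ?case ..
  qed
next
  assume "\<exists>js. occurrence C S js"
  then obtain js where "occurrence C S js" ..
  then have "sorted_wrt (<) js" "set js \<subseteq> {0..<length S}" "C = map ((!) S) js"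
    by (auto simp: occurrence_def)
  then show "subseq C S"
    using subseq_map_nth_sorted[of js 0 "length S" S] by simp
qed

lemma occurrence_through_iff_scover_at:
  assumes i: "i < length S"
  shows "(\<exists>js. occurrence C S js \<and> i \<in> set js) \<longleftrightarrow> scover_at C S i"
proof
  assume "\<exists>js. occurrence C S js \<and> i \<in> set js"
  then obtain js1 js2 where occ: "occurrence C S (js1 @ i # js2)"
    by (metis split_list)
  then have sorted: "sorted_wrt (<) js1" "sorted_wrt (<) js2"
    and before: "set js1 \<subseteq> {0..<i}" and after: "set js2 \<subseteq> {Suc i..<length S}"
    and C: "C = map ((!) S) js1 @ S ! i # map ((!) S) js2"
    by (auto simp: occurrence_def sorted_wrt_append)
  have "subseq (map ((!) S) js1) (take i S)"
    using subseq_map_nth_sorted[OF sorted(1) before, of S] i by simp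
  moreover have "subseq (map ((!) S) js2) (drop (Suc i) S)"
    using subseq_map_nth_sorted[OF sorted(2) after, of S] by simp
  ultimately show "scover_at C S i"
    using C unfolding scover_at_def by blast
next
  assume "scover_at C S i"
  then obtain C1 C2 js1 js2 where C: "C = C1 @ S ! i # C2"
    and occ1: "occurrence C1 (take i S) js1" and occ2: "occurrence C2 (drop (Suc i) S) js2"
    unfolding scover_at_def subseq_iff_occurrence by blast
  define js where "js = js1 @ i # map ((+) (Suc i)) js2"
  have "sorted_wrt (<) js"
    using occ1 occ2 by (auto simp: occurrence_def js_def sorted_wrt_append sorted_wrt_map)
  moreover have "\<forall>j\<in>set js. j < length S"
    using occ1 occ2 i by (auto simp: occurrence_def js_def)
  moreover have "C = map ((!) S) js"
    using occ1 occ2 i by (auto simp: occurrence_def js_def C)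
  ultimately have "occurrence C S js"
    by (simp add: occurrence_def)
  then show "\<exists>js. occurrence C S js \<and> i \<in> set js"
    unfolding js_def by auto
qed

lemma scover_iff_scover_at: "scover C S \<longleftrightarrow> (\<forall>i<length S. scover_at C S i)"
  by (simp add: scover_iff_occurrences occurrence_through_iff_scover_at)

lemma subseq_set_subset: "subseq xs ys \<Longrightarrow> set xs \<subseteq> set ys"
  by (induction rule: list_emb.induct) auto

lemma subseq_rev: "subseq xs ys \<Longrightarrow> subseq (rev xs) (rev ys)"
proof (induction rule: list_emb.induct)
  case (list_emb_Nil ys)
  then show ?case by simp
next
  case (list_emb_Cons xs ys y)
  then show ?case by (simp add: subseq_rev_drop_many)
next
  case (list_emb_Cons2 x y xs ys)
  then show ?case
    using list_emb_append_mono[of "(=)" "rev xs" "rev ys" "[x]" "[y]"] by simp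
qed

lemma scover_at_rev:
  assumes i: "i < length S" and "scover_at C S i"
  shows "scover_at (rev C) (rev S) (length S - Suc i)"
proof -
  obtain C1 C2 where C: "C = C1 @ S ! i # C2"
    and C1: "subseq C1 (take i S)" and C2: "subseq C2 (drop (Suc i) S)"
    using assms(2) unfolding scover_at_def by blast
  have "take (length S - Suc i) (rev S) = rev (drop (Suc i) S)"
    using i by (simp add: take_rev)
  moreover have "drop (Suc (length S - Suc i)) (rev S) = rev (take i S)"
    using i by (simp add: drop_rev Suc_diff_Suc)
  moreover have "rev S ! (length S - Suc i) = S ! i"
    using i by (simp add: rev_nth)
  ultimately show ?thesis
    unfolding scover_at_def C using subseq_rev[OF C1] subseq_rev[OF C2] by auto
qed

lemma scover_rev:
  assumes "scover C S"
  shows "scover (rev C) (rev S)"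
  unfolding scover_iff_scover_at
proof (intro allI impI)
  fix i assume "i < length (rev S)"
  then have "length S - Suc i < length S" and "length S - Suc (length S - Suc i) = i"
    by auto
  then show "scover_at (rev C) (rev S) i"
    using assms scover_at_rev unfolding scover_iff_scover_at by metis
qed

lemma subseq_if_scover: "scover C S \<Longrightarrow> S \<noteq> [] \<Longrightarrow> subseq C S"
  unfolding scover_iff_occurrences subseq_iff_occurrence by blast

lemma scover_append_right:
  assumes cover: "scover C u" and "u \<noteq> []"
  shows "scover (C @ y) (u @ y)"
  unfolding scover_iff_scover_at
proof (intro allI impI)
  fix i assume i: "i < length (u @ y)"
  show "scover_at (C @ y) (u @ y) i"
  proof (cases "i < length u")
    case True
    then obtain C1 C2 where "C = C1 @ u ! i # C2"
      and "subseq C1 (take i u)" and "subseq C2 (drop (Suc i) u)"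
      using cover unfolding scover_iff_scover_at scover_at_def by blast
    then show ?thesis
      using True unfolding scover_at_def
      by (intro exI[of _ C1] exI[of _ "C2 @ y"]) (simp add: nth_append)
  next
    case False
    define i' where "i' = i - length u"
    have i': "i' < length y" "i = length u + i'"
      using i False by (auto simp: i'_def)
    have "subseq C u"
      using assms by (rule subseq_if_scover)
    then have "subseq (C @ take i' y) (take i (u @ y))"
      using i' by simp
    moreover have "C @ y = (C @ take i' y) @ (u @ y) ! i # drop (Suc i') y"
      using i' by (simp add: id_take_nth_drop[symmetric])
    moreover have "subseq (drop (Suc i') y) (drop (Suc i) (u @ y))"
      using i' by simp
    ultimately show ?thesis
      unfolding scover_at_def by blast
  qed
qed

lemma scover_append_left: "scover C u \<Longrightarrow> u \<noteq> [] \<Longrightarrow> scover (x @ C) (x @ u)"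
  using scover_rev[OF scover_append_right[OF scover_rev, of C u "rev x"]] by simp

lemma s_primitive_sublist:
  assumes "sublist u S" and "s_primitive S"
  shows "s_primitive u"
  unfolding s_primitive_def
proof
  assume "\<exists>C. scover C u \<and> length C < length u"
  then obtain C where "scover C u" and short: "length C < length u" by blast
  moreover obtain x y where S: "S = x @ u @ y"
    using assms(1) unfolding sublist_def by blast
  moreover have "u \<noteq> []"
    using short by auto
  ultimately have "scover (x @ C @ y) S"
    by (simp add: scover_append_left scover_append_right)
  moreover have "length (x @ C @ y) < length S"
    using S short by simp
  ultimately show False
    using assms(2) unfolding s_primitive_def by blast
qed

lemma occurrence_map_iff:
  assumes "inj_on f (set C \<union> set S)"
  shows "occurrence (map f C) (map f S) js \<longleftrightarrow> occurrence C S js"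
proof -
  have "map f C = map ((!) (map f S)) js \<longleftrightarrow> C = map ((!) S) js"
    if "\<forall>j\<in>set js. j < length S"
  proof -
    have eq: "map ((!) (map f S)) js = map f (map ((!) S) js)"
      using that by simp
    have "inj_on f (set C \<union> set (map ((!) S) js))"
      using that by (auto intro: inj_on_subset[OF assms])
    then show ?thesis
      unfolding eq by (rule inj_on_map_eq_map)
  qed
  then show ?thesis
    unfolding occurrence_def by (metis length_map)
qed

lemma scover_map_iff:
  "inj_on f (set C \<union> set S) \<Longrightarrow> scover (map f C) (map f S) \<longleftrightarrow> scover C S"
  by (simp add: scover_iff_occurrences occurrence_map_iff)

lemma s_primitive_map:
  assumes inj: "inj_on f (set S)" and "s_primitive S"
  shows "s_primitive (map f S)"
  unfolding s_primitive_def
proof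
  assume "\<exists>D. scover D (map f S) \<and> length D < length (map f S)"
  then obtain D where cover: "scover D (map f S)" and short: "length D < length S" by auto
  then have "subseq D (map f S)"
    by (intro subseq_if_scover) auto
  then have "set D \<subseteq> f ` set S"
    by (metis subseq_set_subset set_map)
  define C where "C = map (inv_into (set S) f) D"
  have "D = map f C"
    unfolding C_def map_map
    by (rule map_idI[symmetric]) (use \<open>set D \<subseteq> f ` set S\<close> in \<open>auto simp: f_inv_into_f\<close>)
  moreover have "set C \<subseteq> set S"
    using \<open>set D \<subseteq> f ` set S\<close> by (auto simp: C_def inv_into_into)
  ultimately have "scover C S"
    using cover scover_map_iff[of f C S] inj by (simp add: Un_absorb1)
  moreover have "length C < length S"
    using short by (simp add: C_def)
  ultimately show False
    using assms(2) unfolding s_primitive_def by blast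
qed

lemma length_le_gamma: "s_primitive S \<Longrightarrow> set S \<subseteq> {..<k} \<Longrightarrow> enat (length S) \<le> gamma k"
  unfolding gamma_def by (rule SUP_upper) simp

lemma length_le_gamma_pred_if_letter_missing:
  assumes "s_primitive S" and S: "set S \<subseteq> {..<k}" and c: "c < k" "c \<notin> set S"
  shows "enat (length S) \<le> gamma (k - 1)"
proof -
  let ?f = "(id(k - 1 := c)) :: nat \<Rightarrow> nat"
  have "inj_on ?f (set S)"
    using c(2) by (auto simp: inj_on_def)
  then have "s_primitive (map ?f S)"
    using assms(1) by (rule s_primitive_map)
  moreover have "set (map ?f S) \<subseteq> {..<k - 1}"
  proof
    fix y assume "y \<in> set (map ?f S)"
    then obtain x where x: "x \<in> set S" "y = ?f x" by auto
    with S c have "x < k" "x \<noteq> c" by auto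
    with x c show "y \<in> {..<k - 1}"
      by (cases "x = k - 1") auto
  qed
  ultimately show ?thesis
    using length_le_gamma[of "map ?f S" "k - 1"] by simp
qed

definition windows_full :: "'a set \<Rightarrow> nat \<Rightarrow> 'a list \<Rightarrow> bool" where
  "windows_full A b w \<longleftrightarrow> (\<forall>u. sublist u w \<longrightarrow> length u = b \<longrightarrow> A \<subseteq> set u)"

lemma windows_full_sublist:
  assumes "windows_full A b w" and "sublist v w"
  shows "windows_full A b v"
  unfolding windows_full_def
proof (intro allI impI)
  fix u assume "sublist u v" and "length u = b"
  then show "A \<subseteq> set u"
    using assms(1) sublist_order.order.trans[OF _ assms(2)] unfolding windows_full_def by blast
qed

lemma windows_full_rev [simp]: "windows_full A b (rev w) \<longleftrightarrow> windows_full A b w"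
proof -
  have "windows_full A b (rev v)" if "windows_full A b v" for v
    using that unfolding windows_full_def by (metis length_rev set_rev sublist_rev_left)
  then show ?thesis
    by (metis rev_rev_ident)
qed

lemma windows_full_take: "windows_full A b w \<Longrightarrow> b \<le> length w \<Longrightarrow> A \<subseteq> set (take b w)"
  unfolding windows_full_def by simp

lemma subseq_if_windows_full:
  "windows_full A b w \<Longrightarrow> set xs \<subseteq> A \<Longrightarrow> length xs * b \<le> length w \<Longrightarrow> subseq xs w"
proof (induction xs arbitrary: w)
  case Nil
  then show ?case by simp
next
  case (Cons x xs)
  have "x \<in> set (take b w)"
    using Cons.prems windows_full_take by fastforce
  then have "subseq [x] (take b w)"
    by (simp add: subseq_singleton_left)
  moreover have "windows_full A b (drop b w)"
    using Cons.prems(1) by (rule windows_full_sublist) simp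
  then have "subseq xs (drop b w)"
    using Cons.prems(2,3) by (intro Cons.IH) auto
  ultimately show ?case
    using list_emb_append_mono by fastforce
qed

lemma windows_full_if_s_primitive:
  assumes "s_primitive S" "set S \<subseteq> {..<k}" and G: "gamma (k - 1) = enat G"
  shows "windows_full {..<k} (Suc G) S"
  unfolding windows_full_def
proof (intro allI impI subsetI)
  fix u c assume u: "sublist u S" "length u = Suc G" and "c \<in> {..<k}"
  show "c \<in> set u"
  proof (rule ccontr)
    assume "c \<notin> set u"
    moreover have "s_primitive u"
      using u(1) assms(1) by (rule s_primitive_sublist)
    moreover have "set u \<subseteq> {..<k}"
      using u(1) assms(2) by (meson order_trans set_mono_sublist)
    ultimately have "enat (length u) \<le> gamma (k - 1)"
      using \<open>c \<in> {..<k}\<close> by (blast intro: length_le_gamma_pred_if_letter_missing)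
    then show False
      using u(2) G by simp
  qed
qed

lemma subseq_remdups: "subseq (remdups xs) xs"
  by (induction xs) auto

lemma remdups_append_filter: "remdups (xs @ ys) = remdups [x\<leftarrow>xs. x \<notin> set ys] @ remdups ys"
  by (induction xs) auto

lemma remdups_split_nth:
  assumes "i < length S"
  obtains R1 R2 where "remdups S = R1 @ S ! i # R2" and "subseq R2 (drop (Suc i) S)"
proof -
  let ?x = "S ! i" and ?T = "drop (Suc i) S"
  obtain R1 R2 where R: "remdups (?x # ?T) = R1 @ ?x # R2" "subseq R2 ?T"
  proof (cases "?x \<in> set ?T")
    case True
    then obtain R1 R2 where R: "remdups ?T = R1 @ ?x # R2"
      by (metis set_remdups split_list)
    then have "subseq R2 (remdups ?T)"
      using subseq_drop_many[OF subseq_order.refl, of R2 "R1 @ [?x]"] by simp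
    then have "subseq R2 ?T"
      using subseq_remdups subseq_order.trans by blast
    then show ?thesis
      using that R True by simp
  next
    case False
    then show ?thesis
      using that[of "[]" "remdups ?T"] by (simp add: subseq_remdups)
  qed
  have "remdups (take i S @ ?x # ?T) = remdups [y\<leftarrow>take i S. y \<notin> set (?x # ?T)] @ R1 @ ?x # R2"
    unfolding R(1)[symmetric] by (rule remdups_append_filter)
  then have "remdups S = (remdups [y\<leftarrow>take i S. y \<notin> set (?x # ?T)] @ R1) @ ?x # R2"
    by (simp only: id_take_nth_drop[OF assms, symmetric] append_assoc)
  then show ?thesis
    using that R(2) by blast
qed

lemma subseq_first_occurrences:
  assumes "set S \<subseteq> set (take n S)"
  shows "subseq (rev (remdups (rev S))) (take n S)"
proof -
  have "remdups (rev S) = remdups (rev (drop n S) @ rev (take n S))"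
    by (metis append_take_drop_id rev_append)
  also have "\<dots> = remdups (rev (take n S))"
    using assms set_drop_subset[of n S] by (intro remdups_append) auto
  finally show ?thesis
    using subseq_rev[OF subseq_remdups[of "rev (take n S)"]] by simp
qed

text \<open>\<^const>\<open>remdups\<close> keeps the last copy of each element, so \<open>remdups S\<close> is \<open>\<rho>\<close> and
  \<open>rev (remdups (rev S))\<close> is \<open>\<sigma>\<close>.\<close>

lemma scover_at_occurrence_orders:
  assumes full: "windows_full (set S) b S" and i: "card (set S) * b \<le> i" "i < length S"
  shows "scover_at (rev (remdups (rev S)) @ remdups S) S i"
proof -
  let ?k = "card (set S)"
  obtain R1 R2 where R: "remdups S = R1 @ S ! i # R2" and R2: "subseq R2 (drop (Suc i) S)"
    using i(2) by (rule remdups_split_nth)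
  have "length (remdups S) = ?k"
    by (rule length_remdups_card_conv)
  then have "length R1 + 1 \<le> ?k"
    using R by simp
  then have "(length R1 + 1) * b \<le> ?k * b"
    by (rule mult_le_mono1)
  then have R1_len: "length R1 * b + b \<le> i"
    using i(1) by simp
  have "set S \<subseteq> set (take b S)"
    using full i R1_len by (intro windows_full_take) auto
  then have "subseq (rev (remdups (rev S))) (take b (take i S))"
    using R1_len subseq_first_occurrences[of S b] by (simp add: min_absorb1)
  moreover have "subseq R1 (drop b (take i S))"
  proof (rule subseq_if_windows_full)
    show "windows_full (set S) b (drop b (take i S))"
      using full by (rule windows_full_sublist) (meson sublist_drop sublist_take sublist_order.order.trans)
    show "set R1 \<subseteq> set S"
      using R by (metis set_remdups Un_iff set_append subsetI)
    show "length R1 * b \<le> length (drop b (take i S))"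
      using R1_len i(2) by simp
  qed
  ultimately have "subseq (rev (remdups (rev S)) @ R1) (take i S)"
    using list_emb_append_mono[of "(=)"] append_take_drop_id by metis
  then show ?thesis
    unfolding scover_at_def R using R2 by (metis append_assoc)
qed

lemma scover_occurrence_orders:
  assumes full: "windows_full (set S) b S" and long: "2 * (card (set S) * b) \<le> length S"
  shows "scover (rev (remdups (rev S)) @ remdups S) S"
  unfolding scover_iff_scover_at
proof (intro allI impI)
  fix i assume i: "i < length S"
  show "scover_at (rev (remdups (rev S)) @ remdups S) S i"
  proof (cases "card (set S) * b \<le> i")
    case True
    then show ?thesis
      by (rule scover_at_occurrence_orders[OF full _ i])
  next
    case False
    \<comment> \<open>In \<open>rev S\<close> the mirrored position lies at least \<open>card (set S) * b\<close> from the start.\<close>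
    have "scover_at (rev (remdups (rev (rev S))) @ remdups (rev S)) (rev S) (length S - Suc i)"
      using full False long i by (intro scover_at_occurrence_orders) auto
    then have "scover_at (rev (rev (remdups (rev (rev S))) @ remdups (rev S))) S i"
      using scover_at_rev[of "length S - Suc i" "rev S"] i by fastforce
    then show ?thesis
      by simp
  qed
qed

lemma length_s_primitive_less:
  assumes prim: "s_primitive S" and S: "set S \<subseteq> {..<k}" and G: "gamma (k - 1) = enat G"
  shows "length S < (2 * k + 2) * Suc G"
proof (rule ccontr)
  assume "\<not> ?thesis"
  then have long: "(2 * k + 2) * Suc G \<le> length S"
    by simp
  have card: "card (set S) \<le> k"
    using S card_mono[of "{..<k}" "set S"] by simp
  have "windows_full {..<k} (Suc G) S"
    using prim S G by (rule windows_full_if_s_primitive)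
  then have "windows_full (set S) (Suc G) S"
    using S unfolding windows_full_def by blast
  moreover have "2 * (card (set S) * Suc G) \<le> length S"
    using long card mult_le_mono1[OF card, of "Suc G"] by simp
  ultimately have "scover (rev (remdups (rev S)) @ remdups S) S"
    by (rule scover_occurrence_orders)
  moreover have "length (rev (remdups (rev S)) @ remdups S) < length S"
    using card long by (simp add: length_remdups_card_conv)
  ultimately show False
    using prim unfolding s_primitive_def by blast
qed

theorem mainTheorem6:
  fixes k :: nat
  assumes "k > 1"
  shows "gamma k \<le> enat (2 * k + 2) * (gamma (k - 1) + 1) - 1"
proof (cases "gamma (k - 1)")
  case infinity
  then show ?thesis by simp
next
  case (enat G)
  have "gamma k \<le> enat ((2 * k + 2) * Suc G - 1)"
    unfolding gamma_def
    using length_s_primitive_less[OF _ _ enat] by (intro SUP_least) fastforce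
  then show ?thesis
    using enat by (simp add: one_enat_def)
qed

end
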